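(* Let $G=(V,E)$ be a graph on $|V|=n$ vertices with minimum degree $\delta(G)>0$ and $|L(G;1/20)|\leq n/14$. Then $f_o(G)\geq n/61$.
   Context: For a graph $G=(V,E)$ and $\beta>0$, $L(G;\beta)$ is the set of vertices $v\in V$ for which there exists $u\in V$ with $uv\in E$ and $|N(u)\setminus N(v)|\geq \beta\,|N(u)\cup N(v)|$, where $N(x)$ is the neighborhood of $x$ in $G$. For a graph $G$, $f_o(G)$ denotes the maximum of $|V_0|$ over all $V_0\subseteq V(G)$ such that the induced subgraph $G[V_0]$ has all degrees odd. *)

theory Defs
  imports Complex_Main
begin

definition simple_graph :: "'a set \<Rightarrow> ('a \<Rightarrow> 'a \<Rightarrow> bool) \<Rightarrow> bool" where
  "simple_graph V adj \<longleftrightarrow> finite V \<and>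
     (\<forall>u v. adj u v \<longrightarrow> u \<in> V \<and> v \<in> V) \<and>
     (\<forall>u v. adj u v \<longrightarrow> adj v u) \<and>
     (\<forall>v. \<not> adj v v)"

definition nbhd :: "'a set \<Rightarrow> ('a \<Rightarrow> 'a \<Rightarrow> bool) \<Rightarrow> 'a \<Rightarrow> 'a set" where
  "nbhd V adj v = {u \<in> V. adj v u}"

definition min_degree :: "'a set \<Rightarrow> ('a \<Rightarrow> 'a \<Rightarrow> bool) \<Rightarrow> nat" where
  "min_degree V adj = Min ((\<lambda>v. card (nbhd V adj v)) ` V)"

definition L_set :: "'a set \<Rightarrow> ('a \<Rightarrow> 'a \<Rightarrow> bool) \<Rightarrow> real \<Rightarrow> 'a set" where
  "L_set V adj \<beta> = {v \<in> V. \<exists>u \<in> V. adj u v \<and>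
      real (card (nbhd V adj u - nbhd V adj v)) \<ge> \<beta> * real (card (nbhd V adj u \<union> nbhd V adj v))}"

definition odd_induced :: "'a set \<Rightarrow> ('a \<Rightarrow> 'a \<Rightarrow> bool) \<Rightarrow> 'a set \<Rightarrow> bool" where
  "odd_induced V adj V0 \<longleftrightarrow> V0 \<subseteq> V \<and> (\<forall>v \<in> V0. odd (card {u \<in> V0. adj v u}))"

definition f_o :: "'a set \<Rightarrow> ('a \<Rightarrow> 'a \<Rightarrow> bool) \<Rightarrow> nat" where
  "f_o V adj = Max (card ` {V0. odd_induced V adj V0})"

end

(* Let S = V - L(G;1/20). For z in S and any neighbour u of z, |N(u) - N(z)| < |N(z)|/19: degrees
   grow by less than a factor 20/19 along an edge into S, and two vertices of S joined by a walk of
   length at most 3 through S share at least half of their neighbourhoods. Double counting then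
   bounds such a 3-ball around p by 3 deg p, and the number of vertices of S with more than half of
   their neighbours in L by (40/19)|L|. A maximal family P of the remaining vertices of S, pairwise
   outside each other's 3-balls, covers them by balls of total size at most 3 sum deg p.
   By Gallai's theorem (every graph splits into two parts inducing only even degrees), applied to
   the complement of G[N(p) \<inter> S], the closed neighbourhood of each p in P contains an odd
   induced subgraph with at least deg p / 4 vertices. For distinct p these pieces are disjoint and
   non-adjacent, so their union is odd induced and has at least a twelfth of the remaining
   vertices. With |L| \<le> n/14 this gives f_o(G) \<ge> 207n/3192 \<ge> n/61. *)

theory Submission
  imports Defs
begin

lemma card_filter_add_card_filter_not:
  "finite A \<Longrightarrow> card {y\<in>A. P y} + card {y\<in>A. \<not> P y} = card A"
  using card_Int_Diff[of A "Collect P"] by (simp add: Int_def set_diff_eq)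

lemma sum_filter_swap:
  assumes "finite A" "finite B"
  shows "(\<Sum>x\<in>A. \<Sum>y\<in>{y\<in>B. R x y}. f x y) = (\<Sum>y\<in>B. \<Sum>x\<in>{x\<in>A. R x y}. f x y)"
  using assms by (simp add: sum.inter_filter sum.swap[of _ A B])

section \<open>Gallai's even partition theorem\<close>

definition even_induced :: "('a \<Rightarrow> 'a \<Rightarrow> bool) \<Rightarrow> 'a set \<Rightarrow> bool" where
  "even_induced R B \<longleftrightarrow> (\<forall>x\<in>B. even (card {y\<in>B. R x y}))"

definition local_complement :: "('a \<Rightarrow> 'a \<Rightarrow> bool) \<Rightarrow> 'a set \<Rightarrow> 'a \<Rightarrow> 'a \<Rightarrow> bool" where
  "local_complement R N x y \<longleftrightarrow> (if x \<in> N \<and> y \<in> N \<and> x \<noteq> y then \<not> R x y else R x y)"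

lemma odd_card_nbrs_local_complement:
  assumes "finite D" and irrefl: "\<And>x. \<not> R x x" and "x \<in> N" "x \<in> D"
  shows "odd (card {y\<in>D. R x y} + card {y\<in>D. local_complement R N x y} + card (N \<inter> D))"
proof -
  have split_R: "{y\<in>D. R x y} = {y\<in>D - N. R x y} \<union> {y\<in>N \<inter> D - {x}. R x y}"
    using irrefl by auto
  have split_R': "{y\<in>D. local_complement R N x y} = {y\<in>D - N. R x y} \<union> {y\<in>N \<inter> D - {x}. \<not> R x y}"
    using irrefl \<open>x \<in> N\<close> by (auto simp: local_complement_def)
  have "card {y\<in>D. R x y} = card {y\<in>D - N. R x y} + card {y\<in>N \<inter> D - {x}. R x y}"
    unfolding split_R by (rule card_Un_disjoint) (use \<open>finite D\<close> in auto)
  moreover have "card {y\<in>D. local_complement R N x y}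
                   = card {y\<in>D - N. R x y} + card {y\<in>N \<inter> D - {x}. \<not> R x y}"
    unfolding split_R' by (rule card_Un_disjoint) (use \<open>finite D\<close> in auto)
  moreover have "card (N \<inter> D - {x}) + 1 = card (N \<inter> D)"
    using assms card_Suc_Diff1[of "N \<inter> D" x] by simp
  ultimately have "card {y\<in>D. R x y} + card {y\<in>D. local_complement R N x y} + 1
                     = 2 * card {y\<in>D - N. R x y} + card (N \<inter> D)"
    using card_filter_add_card_filter_not[of "N \<inter> D - {x}" "R x"] \<open>finite D\<close> by simp
  then have "even (card {y\<in>D. R x y} + card {y\<in>D. local_complement R N x y} + 1 + card (N \<inter> D))"
    by simp
  then show ?thesis by simp
qed

lemma even_induced_of_local_complement:
  assumes "finite D" "\<And>x. \<not> R x x" "odd (card (N \<inter> D))"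
    and even: "even_induced (local_complement R N) D"
  shows "even_induced R D"
  unfolding even_induced_def
proof
  fix x assume "x \<in> D"
  then have even_x: "even (card {y\<in>D. local_complement R N x y})"
    using even by (simp add: even_induced_def)
  show "even (card {y\<in>D. R x y})"
  proof (cases "x \<in> N")
    case True
    with odd_card_nbrs_local_complement[of D R, OF assms(1,2) True \<open>x \<in> D\<close>] even_x assms(3)
    show ?thesis by simp
  next
    case False
    then have "{y\<in>D. R x y} = {y\<in>D. local_complement R N x y}"
      by (auto simp: local_complement_def)
    with even_x show ?thesis by simp
  qed
qed

lemma even_induced_insert_of_local_complement:
  assumes "finite D" and sym: "\<And>x y. R x y \<Longrightarrow> R y x" and irrefl: "\<And>x. \<not> R x x"
    and "v \<notin> D" and nbrs_v: "\<And>y. y \<in> D \<Longrightarrow> R v y \<longleftrightarrow> y \<in> N"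
    and "even (card (N \<inter> D))" and even: "even_induced (local_complement R N) D"
  shows "even_induced R (insert v D)"
  unfolding even_induced_def
proof
  fix x assume "x \<in> insert v D"
  then consider "x = v" | "x \<in> D" "x \<in> N" | "x \<in> D" "x \<notin> N" by blast
  then show "even (card {y\<in>insert v D. R x y})"
  proof cases
    case 1
    then have "{y\<in>insert v D. R x y} = N \<inter> D"
      using irrefl nbrs_v by auto
    with \<open>even (card (N \<inter> D))\<close> show ?thesis by simp
  next
    case 2
    have "{y\<in>insert v D. R x y} = insert v {y\<in>D. R x y}"
      using 2 sym nbrs_v by auto
    then have "card {y\<in>insert v D. R x y} = card {y\<in>D. R x y} + 1"
      using \<open>finite D\<close> \<open>v \<notin> D\<close> by simp
    moreover have "even (card {y\<in>D. local_complement R N x y})"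
      using even 2 by (simp add: even_induced_def)
    ultimately show ?thesis
      using odd_card_nbrs_local_complement[of D R, OF \<open>finite D\<close> irrefl 2(2,1)]
        \<open>even (card (N \<inter> D))\<close> by simp
  next
    case 3
    then have "{y\<in>insert v D. R x y} = {y\<in>D. local_complement R N x y}"
      using sym nbrs_v by (auto simp: local_complement_def)
    with even 3 show ?thesis by (simp add: even_induced_def)
  qed
qed

text \<open>Induction step of Gallai's theorem for a vertex v of odd degree: the part meeting N
  evenly absorbs v, while in the part meeting N oddly the local complementation cancels out.\<close>
lemma even_partition_insert:
  assumes "finite A" and sym: "\<And>x y. R x y \<Longrightarrow> R y x" and irrefl: "\<And>x. \<not> R x x"
    and "v \<notin> A" and N: "N = {y\<in>A. R v y}" and "odd (card N)"
    and part: "B \<union> C = A" "B \<inter> C = {}"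
    and even_B: "even_induced (local_complement R N) B"
    and even_C: "even_induced (local_complement R N) C"
  shows "\<exists>B C. B \<union> C = insert v A \<and> B \<inter> C = {} \<and> even_induced R B \<and> even_induced R C"
proof -
  have "N - B = N \<inter> C"
    using part N by auto
  then have "card N = card (N \<inter> B) + card (N \<inter> C)"
    using card_Int_Diff[of N B] \<open>finite A\<close> N by simp
  with \<open>odd (card N)\<close> obtain B' C' where part': "B' \<union> C' = A" "B' \<inter> C' = {}"
    and "even_induced (local_complement R N) B'" "even_induced (local_complement R N) C'"
    and "even (card (N \<inter> B'))" "odd (card (N \<inter> C'))"
  proof (cases "even (card (N \<inter> B))")
    case True
    with that[of B C] part even_B even_C \<open>odd (card N)\<close> \<open>card N = _\<close> show ?thesis by simp
  next
    case False
    with that[of C B] part even_B even_C \<open>odd (card N)\<close> \<open>card N = _\<close> show ?thesis by auto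
  qed
  have "finite B'" "finite C'" "v \<notin> B'"
    using part' \<open>finite A\<close> \<open>v \<notin> A\<close> by auto
  have "even_induced R (insert v B')"
    by (rule even_induced_insert_of_local_complement)
      (use sym irrefl part' N \<open>finite B'\<close> \<open>v \<notin> B'\<close> \<open>even (card (N \<inter> B'))\<close>
        \<open>even_induced _ B'\<close> in auto)
  moreover have "even_induced R C'"
    using even_induced_of_local_complement[of C' R N] irrefl \<open>finite C'\<close>
      \<open>odd (card (N \<inter> C'))\<close> \<open>even_induced _ C'\<close> by blast
  ultimately show ?thesis
    using part' \<open>v \<notin> A\<close> by (intro exI[of _ "insert v B'"] exI[of _ C']) auto
qed

theorem gallai_even_partition:
  assumes "finite A" and "\<And>x y. R x y \<Longrightarrow> R y x" and "\<And>x. \<not> R x x"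
  shows "\<exists>B C. B \<union> C = A \<and> B \<inter> C = {} \<and> even_induced R B \<and> even_induced R C"
  using assms
proof (induction "card A" arbitrary: A R rule: less_induct)
  case less
  show ?case
  proof (cases "even_induced R A")
    case True
    then show ?thesis by (intro exI[of _ A] exI[of _ "{}"]) (simp add: even_induced_def)
  next
    case False
    then obtain v where "v \<in> A" and odd_v: "odd (card {y\<in>A. R v y})"
      by (auto simp: even_induced_def)
    define A' where "A' = A - {v}"
    define N where "N = {y\<in>A'. R v y}"
    have "finite A'" "v \<notin> A'" and A: "A = insert v A'"
      using less.prems(1) \<open>v \<in> A\<close> by (auto simp: A'_def)
    have "{y\<in>A. R v y} = N"
      using less.prems(3) by (auto simp: N_def A'_def)
    with odd_v have "odd (card N)" by simp
    have "card A' < card A"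
      unfolding A'_def using less.prems(1) \<open>v \<in> A\<close> by (rule card_Diff1_less)
    then have "\<exists>B C. B \<union> C = A' \<and> B \<inter> C = {} \<and> even_induced (local_complement R N) B
                   \<and> even_induced (local_complement R N) C"
      by (rule less.hyps[OF _ \<open>finite A'\<close>])
        (use less.prems(2,3) in \<open>auto simp: local_complement_def\<close>)
    then obtain B C where "B \<union> C = A'" "B \<inter> C = {}"
      and "even_induced (local_complement R N) B" "even_induced (local_complement R N) C"
      by blast
    from even_partition_insert[OF \<open>finite A'\<close> less.prems(2,3) \<open>v \<notin> A'\<close> N_def \<open>odd (card N)\<close> this]
    show ?thesis
      unfolding A .
  qed
qed

section \<open>Odd induced subgraphs\<close>

lemma odd_card_nbrs_add_card_of_even_complement:
  assumes "\<And>x. \<not> adj x x" and "finite D" "w \<in> D"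
    and even: "even_induced (\<lambda>x y. x \<noteq> y \<and> \<not> adj x y) D"
  shows "odd (card {u\<in>D. adj w u} + card D)"
proof -
  have "card {u\<in>D - {w}. adj w u} + card {u\<in>D - {w}. \<not> adj w u} + 1 = card D"
    using card_filter_add_card_filter_not[of "D - {w}" "adj w"] assms(2,3)
      card_Suc_Diff1[of D w] by simp
  moreover have "{u\<in>D - {w}. adj w u} = {u\<in>D. adj w u}"
    using assms(1) by auto
  moreover have "{u\<in>D - {w}. \<not> adj w u} = {u\<in>D. w \<noteq> u \<and> \<not> adj w u}"
    by auto
  ultimately have "card D = card {u\<in>D. adj w u} + card {u\<in>D. w \<noteq> u \<and> \<not> adj w u} + 1"
    by simp
  moreover have "even (card {u\<in>D. w \<noteq> u \<and> \<not> adj w u})"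
    using even \<open>w \<in> D\<close> by (simp add: even_induced_def)
  ultimately show ?thesis by simp
qed

text \<open>If |D| is odd, the common neighbour v repairs the parity of every degree in G[D].\<close>
lemma odd_induced_of_even_complement:
  assumes G: "simple_graph V adj" and "v \<in> V" and D: "D \<subseteq> nbhd V adj v"
    and even: "even_induced (\<lambda>x y. x \<noteq> y \<and> \<not> adj x y) D"
  shows "\<exists>W \<subseteq> insert v D. card D \<le> card W \<and> odd_induced V adj W"
proof -
  have sym: "\<And>x y. adj x y \<Longrightarrow> adj y x" and irrefl: "\<And>x. \<not> adj x x"
    using G by (auto simp: simple_graph_def)
  have "D \<subseteq> V" and adj_v: "\<And>w. w \<in> D \<Longrightarrow> adj v w"
    using D by (auto simp: nbhd_def)
  then have "finite D"
    using G finite_subset by (auto simp: simple_graph_def)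
  note odd_deg = odd_card_nbrs_add_card_of_even_complement[OF irrefl \<open>finite D\<close> _ even]
  show ?thesis
  proof (cases "even (card D)")
    case True
    then have "odd_induced V adj D"
      using odd_deg \<open>D \<subseteq> V\<close> by (auto simp: odd_induced_def)
    then show ?thesis by blast
  next
    case False
    have "v \<notin> D"
      using adj_v irrefl by blast
    have "odd (card {u\<in>insert v D. adj w u})" if "w \<in> insert v D" for w
    proof (cases "w = v")
      case True
      then have "{u\<in>insert v D. adj w u} = D"
        using irrefl adj_v by auto
      with False show ?thesis by simp
    next
      case False
      then have "w \<in> D" using that by simp
      then have "{u\<in>insert v D. adj w u} = insert v {u\<in>D. adj w u}"
        using adj_v sym by auto
      with \<open>finite D\<close> \<open>v \<notin> D\<close> odd_deg[OF \<open>w \<in> D\<close>] \<open>odd (card D)\<close> show ?thesis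
        by simp
    qed
    then have "odd_induced V adj (insert v D)"
      using \<open>D \<subseteq> V\<close> \<open>v \<in> V\<close> by (auto simp: odd_induced_def)
    moreover have "card D \<le> card (insert v D)"
      using \<open>finite D\<close> by (simp add: card_insert_le)
    ultimately show ?thesis by blast
  qed
qed

lemma odd_induced_in_closed_nbhd:
  assumes G: "simple_graph V adj" and "v \<in> V" and A: "A \<subseteq> nbhd V adj v"
  shows "\<exists>W \<subseteq> insert v A. card A \<le> 2 * card W \<and> odd_induced V adj W"
proof -
  let ?co = "\<lambda>x y. x \<noteq> y \<and> \<not> adj x y"
  have "finite (nbhd V adj v)"
    using G by (simp add: simple_graph_def nbhd_def)
  with A have "finite A"
    by (rule finite_subset)
  then have "\<exists>B C. B \<union> C = A \<and> B \<inter> C = {} \<and> even_induced ?co B \<and> even_induced ?co C"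
    by (rule gallai_even_partition) (use G in \<open>auto simp: simple_graph_def\<close>)
  then obtain B C where part: "B \<union> C = A" "B \<inter> C = {}"
    and "even_induced ?co B" "even_induced ?co C"
    by blast
  then have "card A = card B + card C"
    using \<open>finite A\<close> card_Un_disjoint[of B C] by auto
  obtain D where "D \<subseteq> A" "card A \<le> 2 * card D" "even_induced ?co D"
  proof (cases "card C \<le> card B")
    case True
    show ?thesis
      by (rule that[of B]) (use True part \<open>even_induced ?co B\<close> \<open>card A = _\<close> in auto)
  next
    case False
    show ?thesis
      by (rule that[of C]) (use False part \<open>even_induced ?co C\<close> \<open>card A = _\<close> in auto)
  qed
  moreover have "D \<subseteq> nbhd V adj v"
    using \<open>D \<subseteq> A\<close> A by blast
  ultimately obtain W where "W \<subseteq> insert v D" "card D \<le> card W" "odd_induced V adj W"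
    using odd_induced_of_even_complement[OF G \<open>v \<in> V\<close>, of D] by blast
  have "W \<subseteq> insert v A"
    using \<open>W \<subseteq> insert v D\<close> \<open>D \<subseteq> A\<close> by blast
  moreover have "card A \<le> 2 * card W"
    using \<open>card A \<le> 2 * card D\<close> \<open>card D \<le> card W\<close> by linarith
  ultimately show ?thesis
    using \<open>odd_induced V adj W\<close> by blast
qed

lemma odd_induced_UN:
  assumes "finite V" "finite P" and odd: "\<And>p. p \<in> P \<Longrightarrow> odd_induced V adj (W p)"
    and apart: "\<And>p q x y. p \<in> P \<Longrightarrow> q \<in> P \<Longrightarrow> p \<noteq> q \<Longrightarrow> x \<in> W p \<Longrightarrow> y \<in> W q
                  \<Longrightarrow> x \<noteq> y \<and> \<not> adj x y"
  shows "odd_induced V adj (\<Union>p\<in>P. W p)" and "card (\<Union>p\<in>P. W p) = (\<Sum>p\<in>P. card (W p))"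
proof -
  show "odd_induced V adj (\<Union>p\<in>P. W p)"
    unfolding odd_induced_def
  proof (intro conjI ballI)
    show "(\<Union>p\<in>P. W p) \<subseteq> V"
      using odd by (auto simp: odd_induced_def)
  next
    fix w assume "w \<in> (\<Union>p\<in>P. W p)"
    then obtain p where "p \<in> P" "w \<in> W p" by blast
    then have "{u \<in> \<Union>p\<in>P. W p. adj w u} = {u \<in> W p. adj w u}"
      using apart by blast
    with odd \<open>p \<in> P\<close> \<open>w \<in> W p\<close> show "odd (card {u \<in> \<Union>p\<in>P. W p. adj w u})"
      by (simp add: odd_induced_def)
  qed
  have "finite (W p)" if "p \<in> P" for p
    using odd[OF that] \<open>finite V\<close> by (meson odd_induced_def finite_subset)
  moreover have "W p \<inter> W q = {}" if "p \<in> P" "q \<in> P" "p \<noteq> q" for p q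
    using apart[OF that] by blast
  ultimately show "card (\<Union>p\<in>P. W p) = (\<Sum>p\<in>P. card (W p))"
    using \<open>finite P\<close> by (intro card_UN_disjoint) auto
qed

lemma card_le_f_o:
  assumes "simple_graph V adj" and "odd_induced V adj U"
  shows "card U \<le> f_o V adj"
  unfolding f_o_def
proof (rule Max_ge)
  have "{V0. odd_induced V adj V0} \<subseteq> Pow V"
    by (auto simp: odd_induced_def)
  then show "finite (card ` {V0. odd_induced V adj V0})"
    using assms(1) by (auto simp: simple_graph_def intro: finite_subset)
  show "card U \<in> card ` {V0. odd_induced V adj V0}"
    using assms(2) by blast
qed

lemma ex_independent_dominating_set:
  assumes "finite A" and refl: "\<And>x. x \<in> A \<Longrightarrow> r x x" and sym: "\<And>x y. r x y \<Longrightarrow> r y x"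
  shows "\<exists>P \<subseteq> A. (\<forall>p\<in>P. \<forall>q\<in>P. r p q \<longrightarrow> p = q) \<and> (\<forall>x\<in>A. \<exists>p\<in>P. r p x)"
proof -
  define indep where "indep = {P. P \<subseteq> A \<and> (\<forall>p\<in>P. \<forall>q\<in>P. r p q \<longrightarrow> p = q)}"
  have "indep \<subseteq> Pow A"
    by (auto simp: indep_def)
  then have "finite indep"
    using \<open>finite A\<close> by (simp add: finite_subset)
  moreover have "{} \<in> indep"
    by (simp add: indep_def)
  ultimately obtain P where "P \<in> indep" and max: "\<And>Q. Q \<in> indep \<Longrightarrow> P \<subseteq> Q \<Longrightarrow> P = Q"
    using finite_has_maximal[of indep] by blast
  have "\<exists>p\<in>P. r p x" if "x \<in> A" for x
  proof (cases "x \<in> P")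
    case True
    with refl that show ?thesis by blast
  next
    case False
    then have "insert x P \<notin> indep"
      using max[of "insert x P"] by blast
    with \<open>P \<in> indep\<close> \<open>x \<in> A\<close> have "\<exists>q\<in>P. r x q \<or> r q x"
      by (auto simp: indep_def)
    then show ?thesis
      using sym by blast
  qed
  with \<open>P \<in> indep\<close> show ?thesis
    by (auto simp: indep_def)
qed

section \<open>Graphs with few vertices in L(G;1/20)\<close>

locale pos_min_degree_graph =
  fixes V :: "'a set" and adj :: "'a \<Rightarrow> 'a \<Rightarrow> bool"
  assumes simple_graph: "simple_graph V adj"
    and min_degree_pos: "min_degree V adj > 0"
begin

abbreviation N :: "'a \<Rightarrow> 'a set" where "N \<equiv> nbhd V adj"
abbreviation deg :: "'a \<Rightarrow> nat" where "deg v \<equiv> card (N v)"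
abbreviation L :: "'a set" where "L \<equiv> L_set V adj (1/20)"
abbreviation S :: "'a set" where "S \<equiv> V - L"

lemma finite_V: "finite V"
  and adj_sym: "adj u v \<Longrightarrow> adj v u"
  and adj_in_V: "adj u v \<Longrightarrow> u \<in> V"
  using simple_graph by (auto simp: simple_graph_def)

lemma mem_nbhd [simp]: "u \<in> N v \<longleftrightarrow> adj v u"
  by (auto simp: nbhd_def intro: adj_in_V adj_sym)

lemma nbhd_subset: "N v \<subseteq> V"
  by (auto simp: nbhd_def)

lemma finite_nbhd [simp]: "finite (N v)"
  using finite_V nbhd_subset by (rule finite_subset[rotated])

lemma L_subset: "L \<subseteq> V"
  by (auto simp: L_set_def)

lemma deg_pos: "v \<in> V \<Longrightarrow> 0 < deg v"
  using min_degree_pos finite_V unfolding min_degree_def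
  by (metis (no_types, lifting) Min_le finite_imageI image_eqI order_less_le_trans)

lemma card_nbhd_diff_lt:
  assumes "z \<in> S" "adj u z"
  shows "19 * card (N u - N z) < deg z"
proof -
  have "real (card (N u - N z)) < 1/20 * real (card (N u \<union> N z))"
    using assms adj_in_V[OF \<open>adj u z\<close>] by (auto simp: L_set_def)
  moreover have "card (N u \<union> N z) = card (N u - N z) + deg z"
    by (metis Un_Diff_cancel2 card_Un_disjoint Diff_disjoint finite_Diff finite_nbhd inf_commute)
  ultimately show ?thesis by simp
qed

lemma deg_adj_lt:
  assumes "z \<in> S" "adj u z"
  shows "19 * deg u < 20 * deg z"
proof -
  have "deg u \<le> card (N z \<union> (N u - N z))"
    by (rule card_mono) auto
  also have "\<dots> \<le> deg z + card (N u - N z)"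
    by (rule card_Un_le)
  finally show ?thesis
    using card_nbhd_diff_lt[OF assms] by linarith
qed

definition adj_or_eq :: "'a \<Rightarrow> 'a \<Rightarrow> bool" where
  "adj_or_eq a b \<longleftrightarrow> a = b \<or> adj a b"

definition near :: "'a \<Rightarrow> 'a \<Rightarrow> bool" where
  "near p x \<longleftrightarrow> (\<exists>a\<in>S. \<exists>b\<in>S. adj_or_eq p a \<and> adj_or_eq a b \<and> adj_or_eq b x)"

lemma adj_or_eq_sym: "adj_or_eq a b \<Longrightarrow> adj_or_eq b a"
  by (auto simp: adj_or_eq_def adj_sym)

lemma near_sym: "near p x \<Longrightarrow> near x p"
  unfolding near_def by (meson adj_or_eq_sym)

lemma near_refl: "p \<in> S \<Longrightarrow> near p p"
  by (auto simp: near_def adj_or_eq_def)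

lemma adj_or_eq_bounds:
  assumes "a \<in> S" "b \<in> S" "adj_or_eq a b"
  shows "19 * card (N a - N b) \<le> deg b" and "19 * deg b \<le> 20 * deg a"
  using assms card_nbhd_diff_lt[of b a] deg_adj_lt[of a b] adj_sym[of a b]
  by (auto simp: adj_or_eq_def less_imp_le)

lemma card_nbhd_diff_triangle: "card (N a - N c) \<le> card (N a - N b) + card (N b - N c)"
proof -
  have "card (N a - N c) \<le> card ((N a - N b) \<union> (N b - N c))"
    by (rule card_mono) auto
  also have "\<dots> \<le> card (N a - N b) + card (N b - N c)"
    by (rule card_Un_le)
  finally show ?thesis .
qed

lemma deg_le_card_common_nbhd:
  assumes "p \<in> S" "x \<in> S" "near p x"
  shows "deg p \<le> 2 * card (N p \<inter> N x)"
proof -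
  obtain a b where "a \<in> S" "b \<in> S" "adj_or_eq p a" "adj_or_eq a b" "adj_or_eq b x"
    using \<open>near p x\<close> by (auto simp: near_def)
  note bounds_pa = adj_or_eq_bounds[OF \<open>p \<in> S\<close> \<open>a \<in> S\<close> \<open>adj_or_eq p a\<close>]
  note bounds_ab = adj_or_eq_bounds[OF \<open>a \<in> S\<close> \<open>b \<in> S\<close> \<open>adj_or_eq a b\<close>]
  note bounds_bx = adj_or_eq_bounds[OF \<open>b \<in> S\<close> \<open>x \<in> S\<close> \<open>adj_or_eq b x\<close>]
  have "card (N p - N x) \<le> card (N p - N a) + card (N a - N b) + card (N b - N x)"
    using card_nbhd_diff_triangle[of p x a] card_nbhd_diff_triangle[of a x b] by linarith
  moreover have "deg p = card (N p \<inter> N x) + card (N p - N x)"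
    using card_Int_Diff[of "N p" "N x"] by simp
  \<comment> \<open>|N p - N x| \<le> (20/19 + (20/19)^2 + (20/19)^3) deg p / 19 < deg p / 2\<close>
  ultimately show ?thesis
    using bounds_pa bounds_ab bounds_bx by linarith
qed

lemma sum_card_common_nbhd_le:
  assumes "finite X"
  shows "(\<Sum>x\<in>X. card (N p \<inter> N x)) \<le> (\<Sum>y\<in>N p. deg y)"
proof -
  have "(\<Sum>x\<in>X. card (N p \<inter> N x)) = (\<Sum>x\<in>X. \<Sum>y\<in>{y\<in>N p. adj x y}. 1)"
    by (intro sum.cong) (auto intro: arg_cong[where f = card])
  also have "\<dots> = (\<Sum>y\<in>N p. \<Sum>x\<in>{x\<in>X. adj x y}. 1)"
    using assms finite_nbhd by (rule sum_filter_swap)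
  also have "\<dots> \<le> (\<Sum>y\<in>N p. deg y)"
  proof (rule sum_mono)
    fix y
    have "{x\<in>X. adj x y} \<subseteq> N y"
      using adj_sym by auto
    then show "(\<Sum>x\<in>{x\<in>X. adj x y}. 1) \<le> deg y"
      by (simp add: card_mono)
  qed
  finally show ?thesis .
qed

lemma sum_deg_nbhd_le:
  assumes "p \<in> S"
  shows "19 * (\<Sum>y\<in>N p. deg y) \<le> 20 * deg p * deg p"
proof -
  have "(\<Sum>y\<in>N p. 19 * deg y) \<le> (\<Sum>y\<in>N p. 20 * deg p)"
    using deg_adj_lt[OF assms] adj_sym by (intro sum_mono) (simp add: less_imp_le)
  then show ?thesis
    by (simp add: sum_distrib_left)
qed

lemma card_near_le:
  assumes "p \<in> S"
  shows "card {x\<in>S. near p x} \<le> 3 * deg p"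
proof -
  define X where "X = {x\<in>S. near p x}"
  have "finite X"
    using finite_V by (simp add: X_def)
  have "card X * deg p = (\<Sum>x\<in>X. deg p)"
    by simp
  also have "\<dots> \<le> (\<Sum>x\<in>X. 2 * card (N p \<inter> N x))"
    using deg_le_card_common_nbhd assms by (intro sum_mono) (simp add: X_def)
  also have "\<dots> \<le> 2 * (\<Sum>y\<in>N p. deg y)"
    using sum_card_common_nbhd_le[OF \<open>finite X\<close>] by (simp add: sum_distrib_left[symmetric])
  finally have "19 * card X * deg p \<le> 40 * deg p * deg p"
    using sum_deg_nbhd_le[OF assms] by linarith
  then have "19 * card X \<le> 40 * deg p"
    using deg_pos assms by simp
  then show ?thesis
    by (simp add: X_def)
qed

definition sparse :: "'a set" where
  "sparse = {x\<in>S. 2 * card (N x \<inter> S) < deg x}"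

lemma deg_eq_card_nbhd_S_L: "deg x = card (N x \<inter> S) + card (N x \<inter> L)"
proof -
  have "N x \<inter> S = N x - L"
    using nbhd_subset by blast
  then show ?thesis
    using card_Int_Diff[of "N x" L] by (simp add: Int_commute)
qed

lemma sum_card_nbhd_L_div_deg_le:
  "(\<Sum>x\<in>S. real (card (N x \<inter> L)) / deg x) \<le> 20/19 * card L"
proof -
  have "finite S" "finite L"
    using finite_V L_subset finite_subset by auto
  have "(\<Sum>x\<in>S. real (card (N x \<inter> L)) / deg x) = (\<Sum>x\<in>S. \<Sum>u\<in>{u\<in>L. adj x u}. 1 / deg x)"
    by (intro sum.cong refl) (simp add: Int_def conj_commute)
  also have "\<dots> = (\<Sum>u\<in>L. \<Sum>x\<in>{x\<in>S. adj x u}. 1 / deg x)"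
    using \<open>finite S\<close> \<open>finite L\<close> by (rule sum_filter_swap)
  also have "\<dots> \<le> (\<Sum>u\<in>L. \<Sum>x\<in>{x\<in>S. adj x u}. (20/19) / deg u)"
  proof (intro sum_mono)
    fix u x assume "u \<in> L" "x \<in> {x\<in>S. adj x u}"
    then have "19 * deg u < 20 * deg x" "0 < deg u" "0 < deg x"
      using deg_adj_lt adj_sym deg_pos L_subset by auto
    then show "1 / real (deg x) \<le> (20/19) / deg u"
      by (simp add: field_simps)
  qed
  also have "\<dots> \<le> (\<Sum>u\<in>L. 20/19)"
  proof (intro sum_mono)
    fix u assume "u \<in> L"
    have "{x\<in>S. adj x u} \<subseteq> N u"
      using adj_sym by auto
    then have "card {x\<in>S. adj x u} \<le> deg u"
      by (simp add: card_mono)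
    moreover have "0 < deg u"
      using \<open>u \<in> L\<close> deg_pos L_subset by auto
    ultimately show "(\<Sum>x\<in>{x\<in>S. adj x u}. (20/19) / real (deg u)) \<le> 20/19"
      by (simp add: field_simps)
  qed
  finally show ?thesis
    by simp
qed

lemma card_sparse_le: "19 * real (card sparse) \<le> 40 * real (card L)"
proof -
  have "finite S"
    using finite_V by simp
  have "real (card sparse) = (\<Sum>x\<in>sparse. 1)"
    by simp
  also have "\<dots> \<le> (\<Sum>x\<in>sparse. 2 * (real (card (N x \<inter> L)) / deg x))"
  proof (rule sum_mono)
    fix x assume "x \<in> sparse"
    then have "deg x < 2 * card (N x \<inter> L)" "0 < deg x"
      using deg_eq_card_nbhd_S_L[of x] deg_pos by (auto simp: sparse_def)
    then show "1 \<le> 2 * (real (card (N x \<inter> L)) / deg x)"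
      by (simp add: field_simps)
  qed
  also have "\<dots> \<le> (\<Sum>x\<in>S. 2 * (real (card (N x \<inter> L)) / deg x))"
    using \<open>finite S\<close> by (intro sum_mono2) (auto simp: sparse_def)
  also have "\<dots> = 2 * (\<Sum>x\<in>S. real (card (N x \<inter> L)) / deg x)"
    by (rule sum_distrib_left[symmetric])
  finally show ?thesis
    using sum_card_nbhd_L_div_deg_le by simp
qed

lemma near_if_closed_nbhds_touch:
  assumes "p \<in> S" "q \<in> S" "w \<in> insert p (N p \<inter> S)" "w' \<in> insert q (N q \<inter> S)"
    and "adj_or_eq w w'"
  shows "near p q"
proof -
  have "adj_or_eq p w" "adj_or_eq w' q"
    using assms(3,4) adj_sym by (auto simp: adj_or_eq_def)
  moreover have "w \<in> S" "w' \<in> S"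
    using assms(1-4) by auto
  ultimately show ?thesis
    using \<open>adj_or_eq w w'\<close> by (auto simp: near_def)
qed

lemma ex_odd_induced_of_pairwise_not_near:
  assumes "P \<subseteq> S" and far: "\<forall>p\<in>P. \<forall>q\<in>P. near p q \<longrightarrow> p = q"
  shows "\<exists>U. odd_induced V adj U \<and> (\<Sum>p\<in>P. card (N p \<inter> S)) \<le> 2 * card U"
proof -
  have "\<forall>p\<in>P. \<exists>W. W \<subseteq> insert p (N p \<inter> S) \<and> card (N p \<inter> S) \<le> 2 * card W \<and> odd_induced V adj W"
  proof
    fix p assume "p \<in> P"
    then have "p \<in> V" using \<open>P \<subseteq> S\<close> by blast
    then show "\<exists>W. W \<subseteq> insert p (N p \<inter> S) \<and> card (N p \<inter> S) \<le> 2 * card W \<and> odd_induced V adj W"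
      using odd_induced_in_closed_nbhd[OF simple_graph \<open>p \<in> V\<close>, of "N p \<inter> S"] by blast
  qed
  from bchoice[OF this] obtain W where W: "\<forall>p\<in>P. W p \<subseteq> insert p (N p \<inter> S)
      \<and> card (N p \<inter> S) \<le> 2 * card (W p) \<and> odd_induced V adj (W p)"
    by blast
  have apart: "x \<noteq> y \<and> \<not> adj x y"
    if "p \<in> P" "q \<in> P" "p \<noteq> q" "x \<in> W p" "y \<in> W q" for p q x y
  proof (rule ccontr)
    assume "\<not> (x \<noteq> y \<and> \<not> adj x y)"
    then have "adj_or_eq x y"
      by (auto simp: adj_or_eq_def)
    moreover have "p \<in> S" "q \<in> S" "x \<in> insert p (N p \<inter> S)" "y \<in> insert q (N q \<inter> S)"
      using that W \<open>P \<subseteq> S\<close> by blast+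
    ultimately have "near p q"
      using near_if_closed_nbhds_touch by blast
    with far that show False by blast
  qed
  have "finite P"
    using \<open>P \<subseteq> S\<close> finite_V finite_subset by blast
  moreover have "\<And>p. p \<in> P \<Longrightarrow> odd_induced V adj (W p)"
    using W by blast
  ultimately have "odd_induced V adj (\<Union>p\<in>P. W p)"
    and "card (\<Union>p\<in>P. W p) = (\<Sum>p\<in>P. card (W p))"
    using odd_induced_UN[OF finite_V] apart by blast+
  have "(\<Sum>p\<in>P. card (N p \<inter> S)) \<le> (\<Sum>p\<in>P. 2 * card (W p))"
    using W by (intro sum_mono) blast
  with \<open>card (\<Union>p\<in>P. W p) = _\<close> \<open>odd_induced V adj (\<Union>p\<in>P. W p)\<close> show ?thesis
    by (auto simp: sum_distrib_left)
qed

lemma card_S_sparse_le_f_o: "card (S - sparse) \<le> 12 * f_o V adj"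
proof -
  have "finite (S - sparse)"
    using finite_V by simp
  then obtain P where "P \<subseteq> S - sparse" and far: "\<forall>p\<in>P. \<forall>q\<in>P. near p q \<longrightarrow> p = q"
    and dominating: "\<forall>x\<in>S - sparse. \<exists>p\<in>P. near p x"
    using ex_independent_dominating_set[of "S - sparse" near] near_refl near_sym by blast
  have "finite P"
    using \<open>P \<subseteq> S - sparse\<close> \<open>finite (S - sparse)\<close> finite_subset by blast
  obtain U where "odd_induced V adj U" and U: "(\<Sum>p\<in>P. card (N p \<inter> S)) \<le> 2 * card U"
    using ex_odd_induced_of_pairwise_not_near[of P] \<open>P \<subseteq> S - sparse\<close> far by blast
  have "card (S - sparse) \<le> card (\<Union>p\<in>P. {x\<in>S. near p x})"
    using dominating \<open>finite P\<close> finite_V by (intro card_mono) auto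
  also have "\<dots> \<le> (\<Sum>p\<in>P. card {x\<in>S. near p x})"
    by (rule card_UN_le[OF \<open>finite P\<close>])
  also have "\<dots> \<le> (\<Sum>p\<in>P. 6 * card (N p \<inter> S))"
  proof (rule sum_mono)
    fix p assume "p \<in> P"
    then have "p \<in> S" "deg p \<le> 2 * card (N p \<inter> S)"
      using \<open>P \<subseteq> S - sparse\<close> by (auto simp: sparse_def)
    then show "card {x\<in>S. near p x} \<le> 6 * card (N p \<inter> S)"
      using card_near_le[of p] by linarith
  qed
  also have "\<dots> \<le> 12 * card U"
    using U by (simp add: sum_distrib_left[symmetric])
  also have "\<dots> \<le> 12 * f_o V adj"
    using card_le_f_o[OF simple_graph \<open>odd_induced V adj U\<close>] by simp
  finally show ?thesis .
qed

lemma card_V_le: "real (card V) \<le> 12 * real (f_o V adj) + 59/19 * real (card L)"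
proof -
  have "sparse \<subseteq> S"
    by (auto simp: sparse_def)
  then have "card S = card sparse + card (S - sparse)"
    using card_Int_Diff[of S sparse] finite_V by (simp add: Int_absorb1)
  moreover have "card V = card L + card S"
    using card_Int_Diff[of V L] finite_V L_subset by (simp add: Int_absorb1)
  ultimately have "real (card V) = card (S - sparse) + real (card sparse) + card L"
    by simp
  moreover have "real (card (S - sparse)) \<le> 12 * real (f_o V adj)"
    using card_S_sparse_le_f_o by (simp add: of_nat_mono)
  ultimately show ?thesis
    using card_sparse_le by linarith
qed

end

theorem lemma2p5:
  fixes V :: "'a set" and adj :: "'a \<Rightarrow> 'a \<Rightarrow> bool"
  assumes "simple_graph V adj"
    and "V \<noteq> {}"
    and "min_degree V adj > 0"
    and "real (card (L_set V adj (1/20))) \<le> real (card V) / 14"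
  shows "real (f_o V adj) \<ge> real (card V) / 61"
proof -
  have "pos_min_degree_graph V adj"
    using assms(1,3) by unfold_locales
  from pos_min_degree_graph.card_V_le[OF this] assms(4) show ?thesis
    by linarith
qed

end
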